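(* Let $D$ be a rooted hyperbolic digraph with root $o$, constant out-degree and bounded in-degree. Let $g$ be an elliptic self-embedding of $D$ and let $n\in\mathbb{N}$. Then there exists an integer $i\ge1$ such that $g^i$ fixes every vertex of $\mathcal{B}^+_n(o)\cup\mathcal{B}^-_n(o)$.
   Context: A directed path $x_0\ldots x_n$ has edges $x_ix_{i+1}$; $d(x,y)$ is the length of a shortest directed $x$-$y$ path ($\infty$ if none), called an $x$-$y$ geodesic. $D$ is rooted with root $o$ if $d(o,v)<\infty$ for all $v$. $\mathcal{B}^+_k(x)=\{y:d(x,y)\le k\}$, $\mathcal{B}^-_k(x)=\{y:d(y,x)\le k\}$, extended to sets by unions. A geodesic triangle consists of three vertices and for each pair a geodesic between them (in one direction); it is $\delta$-thin if whenever $P,Q,R$ are its sides with the start of $P$ being the start or end of $Q$ and the end of $P$ being the start or end of $R$, $P\subseteq\mathcal{B}^+_\delta(Q)\cup\mathcal{B}^-_\delta(R)$; $D$ is hyperbolic if for some $\delta\ge0$ all geodesic triangles are $\delta$-thin. A self-embedding is an injective $g:V(D)\to V(D)$ with $xy\in E(D)\iff g(x)g(y)\in E(D)$; it is elliptic if $g(F)=F$ for some nonempty finite vertex set $F$. *)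

theory Defs
  imports Main "HOL-Library.Extended_Nat"
begin

definition dwalk :: "'a set \<Rightarrow> ('a \<times> 'a) set \<Rightarrow> 'a list \<Rightarrow> bool" where
  "dwalk V E p \<longleftrightarrow> p \<noteq> [] \<and> set p \<subseteq> V \<and> (\<forall>i. Suc i < length p \<longrightarrow> (p ! i, p ! Suc i) \<in> E)"

definition plen :: "'a list \<Rightarrow> nat" where
  "plen p = length p - 1"

text \<open>Directed distance; infinity if there is no directed path.\<close>
definition ddist :: "'a set \<Rightarrow> ('a \<times> 'a) set \<Rightarrow> 'a \<Rightarrow> 'a \<Rightarrow> enat" where
  "ddist V E x y = (INF p \<in> {p. dwalk V E p \<and> hd p = x \<and> last p = y}. enat (plen p))"

definition geodesic :: "'a set \<Rightarrow> ('a \<times> 'a) set \<Rightarrow> 'a list \<Rightarrow> bool" where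
  "geodesic V E p \<longleftrightarrow> dwalk V E p \<and> enat (plen p) = ddist V E (hd p) (last p)"

definition rooted :: "'a set \<Rightarrow> ('a \<times> 'a) set \<Rightarrow> 'a \<Rightarrow> bool" where
  "rooted V E o' \<longleftrightarrow> o' \<in> V \<and> (\<forall>v\<in>V. ddist V E o' v < \<infinity>)"

definition out_ball :: "'a set \<Rightarrow> ('a \<times> 'a) set \<Rightarrow> nat \<Rightarrow> 'a set \<Rightarrow> 'a set" where
  "out_ball V E k X = {y \<in> V. \<exists>x\<in>X. ddist V E x y \<le> enat k}"

definition in_ball :: "'a set \<Rightarrow> ('a \<times> 'a) set \<Rightarrow> nat \<Rightarrow> 'a set \<Rightarrow> 'a set" where
  "in_ball V E k X = {y \<in> V. \<exists>x\<in>X. ddist V E y x \<le> enat k}"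

definition geod_between :: "'a set \<Rightarrow> ('a \<times> 'a) set \<Rightarrow> 'a \<Rightarrow> 'a \<Rightarrow> 'a list \<Rightarrow> bool" where
  "geod_between V E x y p \<longleftrightarrow> geodesic V E p \<and>
     ((hd p = x \<and> last p = y) \<or> (hd p = y \<and> last p = x))"

definition geod_triangle :: "'a set \<Rightarrow> ('a \<times> 'a) set \<Rightarrow> 'a \<Rightarrow> 'a \<Rightarrow> 'a \<Rightarrow> (nat \<Rightarrow> 'a list) \<Rightarrow> bool" where
  "geod_triangle V E x y z S \<longleftrightarrow> x \<in> V \<and> y \<in> V \<and> z \<in> V \<and>
     geod_between V E x y (S 0) \<and> geod_between V E y z (S 1) \<and> geod_between V E z x (S 2)"

definition thin_triangle :: "'a set \<Rightarrow> ('a \<times> 'a) set \<Rightarrow> nat \<Rightarrow> (nat \<Rightarrow> 'a list) \<Rightarrow> bool" where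
  "thin_triangle V E \<delta> S \<longleftrightarrow>
     (\<forall>a b c. {a, b, c} = {0, 1, 2::nat} \<longrightarrow>
        hd (S a) \<in> {hd (S b), last (S b)} \<longrightarrow> last (S a) \<in> {hd (S c), last (S c)} \<longrightarrow>
        set (S a) \<subseteq> out_ball V E \<delta> (set (S b)) \<union> in_ball V E \<delta> (set (S c)))"

definition hyperbolic :: "'a set \<Rightarrow> ('a \<times> 'a) set \<Rightarrow> bool" where
  "hyperbolic V E \<longleftrightarrow> (\<exists>\<delta>::nat. \<forall>x y z S. geod_triangle V E x y z S \<longrightarrow> thin_triangle V E \<delta> S)"

definition out_nbrs :: "('a \<times> 'a) set \<Rightarrow> 'a \<Rightarrow> 'a set" where
  "out_nbrs E v = {w. (v, w) \<in> E}"

definition in_nbrs :: "('a \<times> 'a) set \<Rightarrow> 'a \<Rightarrow> 'a set" where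
  "in_nbrs E v = {w. (w, v) \<in> E}"

definition const_out_degree :: "'a set \<Rightarrow> ('a \<times> 'a) set \<Rightarrow> bool" where
  "const_out_degree V E \<longleftrightarrow> (\<exists>k::nat. \<forall>v\<in>V. finite (out_nbrs E v) \<and> card (out_nbrs E v) = k)"

definition bounded_in_degree :: "'a set \<Rightarrow> ('a \<times> 'a) set \<Rightarrow> bool" where
  "bounded_in_degree V E \<longleftrightarrow> (\<exists>m::nat. \<forall>v\<in>V. finite (in_nbrs E v) \<and> card (in_nbrs E v) \<le> m)"

definition self_embedding :: "'a set \<Rightarrow> ('a \<times> 'a) set \<Rightarrow> ('a \<Rightarrow> 'a) \<Rightarrow> bool" where
  "self_embedding V E g \<longleftrightarrow> g ` V \<subseteq> V \<and> inj_on g V \<and>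
     (\<forall>x\<in>V. \<forall>y\<in>V. (x, y) \<in> E \<longleftrightarrow> (g x, g y) \<in> E)"

definition elliptic :: "'a set \<Rightarrow> ('a \<Rightarrow> 'a) \<Rightarrow> bool" where
  "elliptic V g \<longleftrightarrow> (\<exists>F. F \<subseteq> V \<and> F \<noteq> {} \<and> finite F \<and> g ` F = F)"

end

theory Submission
  imports Defs "HOL-Combinatorics.Cycles"
begin

text \<open>Pick \<open>f\<close> in
  a finite nonempty \<open>g\<close>-invariant set \<open>F\<close> and let \<open>L = d(o, f)\<close>. Edge-preserving maps do not
  increase distances, so the in-ball \<open>W\<close> of radius \<open>L + n\<close> around \<open>F\<close> and the set
  \<open>U = W \<union> B\<^sup>+\<^sub>n(W)\<close> are mapped into themselves by \<open>g\<close>, and both are finite by local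
  finiteness. Since \<open>o \<in> W\<close> and every vertex of \<open>B\<^sup>-\<^sub>n(o)\<close> lies within \<open>L + n\<close> of \<open>f\<close>,
  \<open>U\<close> contains both balls of radius \<open>n\<close> around \<open>o\<close>. Finally, \<open>g\<close> permutes the finite set \<open>U\<close>,
  so some positive power of \<open>g\<close> is the identity on \<open>U\<close>.\<close>

lemma dwalk_singleton [simp]: "dwalk V E [x] \<longleftrightarrow> x \<in> V"
  by (auto simp: dwalk_def)

lemma dwalk_Cons_Cons [simp]:
  "dwalk V E (x # y # p) \<longleftrightarrow> x \<in> V \<and> (x, y) \<in> E \<and> dwalk V E (y # p)"
  by (auto simp: dwalk_def nth_Cons split: nat.splits)

lemma dwalk_nonempty: "dwalk V E p \<Longrightarrow> p \<noteq> []"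
  by (simp add: dwalk_def)

lemma dwalk_Cons_in: "dwalk V E (x # p) \<Longrightarrow> x \<in> V"
  by (simp add: dwalk_def)

lemma dwalk_append:
  "dwalk V E p \<Longrightarrow> dwalk V E q \<Longrightarrow> last p = hd q \<Longrightarrow> dwalk V E (p @ tl q)"
proof (induction p rule: induct_list012)
  case (2 x)
  then show ?case
    using dwalk_nonempty[of V E q] by (cases q) auto
next
  case (3 x y p)
  then show ?case
    by (cases "p @ tl q") auto
qed (simp add: dwalk_def)

lemma dwalk_rev_converse: "dwalk V E p \<Longrightarrow> dwalk V (E\<inverse>) (rev p)"
proof (induction p rule: induct_list012)
  case (3 x y p)
  then have "dwalk V (E\<inverse>) (rev (y # p))" "dwalk V (E\<inverse>) [y, x]"
    by (auto dest: dwalk_Cons_in)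
  from dwalk_append[OF this] show ?case
    by simp
qed (simp_all add: dwalk_def)

lemma dwalk_map:
  assumes "g ` V \<subseteq> V" and "\<And>x y. x \<in> V \<Longrightarrow> y \<in> V \<Longrightarrow> (x, y) \<in> E \<Longrightarrow> (g x, g y) \<in> E"
  shows "dwalk V E p \<Longrightarrow> dwalk V E (map g p)"
proof (induction p rule: induct_list012)
  case (3 x y p)
  then show ?case
    using assms by (auto dest: dwalk_Cons_in)
qed (use assms in auto)

lemma ddist_le_enat_iff:
  "ddist V E x y \<le> enat k \<longleftrightarrow> (\<exists>p. dwalk V E p \<and> hd p = x \<and> last p = y \<and> plen p \<le> k)"
proof
  let ?walk = "\<lambda>p. dwalk V E p \<and> hd p = x \<and> last p = y"
  let ?lengths = "(\<lambda>p. enat (plen p)) ` {p. ?walk p}"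
  have ddist_eq: "ddist V E x y = Inf ?lengths"
    by (simp only: ddist_def)
  assume le: "ddist V E x y \<le> enat k"
  have "?lengths \<noteq> {}"
  proof
    assume "?lengths = {}"
    then have "ddist V E x y = \<infinity>"
      unfolding ddist_eq by (simp only: Inf_empty top_enat_def)
    with le show False
      by simp
  qed
  then have "Inf ?lengths \<in> ?lengths"
    by (meson ex_in_conv wellorder_InfI)
  then obtain p where "?walk p" "ddist V E x y = enat (plen p)"
    unfolding ddist_eq by blast
  with le show "\<exists>p. dwalk V E p \<and> hd p = x \<and> last p = y \<and> plen p \<le> k"
    by auto
next
  assume "\<exists>p. dwalk V E p \<and> hd p = x \<and> last p = y \<and> plen p \<le> k"
  then obtain p where "dwalk V E p" "hd p = x" "last p = y" "plen p \<le> k"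
    by blast
  then have "ddist V E x y \<le> enat (plen p)"
    unfolding ddist_def by (intro INF_lower) blast
  with \<open>plen p \<le> k\<close> show "ddist V E x y \<le> enat k"
    by (meson enat_ord_simps(1) order_trans)
qed

lemma ddist_triangle:
  assumes "ddist V E x y \<le> enat a" and "ddist V E y z \<le> enat b"
  shows "ddist V E x z \<le> enat (a + b)"
proof -
  obtain p where p: "dwalk V E p" "hd p = x" "last p = y" "plen p \<le> a"
    using assms(1) unfolding ddist_le_enat_iff by blast
  obtain q where q: "dwalk V E q" "hd q = y" "last q = z" "plen q \<le> b"
    using assms(2) unfolding ddist_le_enat_iff by blast
  have "p \<noteq> []" "q \<noteq> []"
    using p q dwalk_nonempty by auto
  moreover have "dwalk V E (p @ tl q)"
    using dwalk_append[OF p(1) q(1)] p(3) q(2) by simp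
  ultimately show ?thesis
    unfolding ddist_le_enat_iff using p q
    by (intro exI[of _ "p @ tl q"]) (cases q; auto simp: plen_def)
qed

lemma ddist_converse_le_enat_iff:
  "ddist V (E\<inverse>) x y \<le> enat k \<longleftrightarrow> ddist V E y x \<le> enat k"
proof -
  have "ddist V (E\<inverse>) x y \<le> enat k" if "ddist V E y x \<le> enat k" for E :: "('a \<times> 'a) set" and x y
    using that dwalk_rev_converse dwalk_nonempty unfolding ddist_le_enat_iff
    by (metis hd_rev last_rev length_rev plen_def)
  from this[of E] this[of "E\<inverse>"] show ?thesis
    by auto
qed

lemma in_ball_eq_out_ball_converse: "in_ball V E k X = out_ball V (E\<inverse>) k X"
  unfolding in_ball_def out_ball_def ddist_converse_le_enat_iff ..

lemma out_ball_image_subset: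
  assumes "g ` V \<subseteq> V" and "\<And>x y. x \<in> V \<Longrightarrow> y \<in> V \<Longrightarrow> (x, y) \<in> E \<Longrightarrow> (g x, g y) \<in> E"
  shows "g ` out_ball V E k X \<subseteq> out_ball V E k (g ` X)"
proof
  fix z
  assume "z \<in> g ` out_ball V E k X"
  then obtain x y where xy: "z = g y" "y \<in> V" "x \<in> X" "ddist V E x y \<le> enat k"
    unfolding out_ball_def by auto
  then obtain p where p: "dwalk V E p" "hd p = x" "last p = y" "plen p \<le> k"
    using ddist_le_enat_iff by metis
  moreover have "p \<noteq> []"
    using p(1) by (rule dwalk_nonempty)
  ultimately have "dwalk V E (map g p) \<and> hd (map g p) = g x \<and> last (map g p) = g y \<and> plen (map g p) \<le> k"
    using dwalk_map[OF assms] by (auto simp: hd_map last_map plen_def)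
  then have "ddist V E (g x) (g y) \<le> enat k"
    using ddist_le_enat_iff by metis
  with xy assms(1) show "z \<in> out_ball V E k (g ` X)"
    unfolding out_ball_def by auto
qed

lemma out_ball_mono: "X \<subseteq> Y \<Longrightarrow> out_ball V E k X \<subseteq> out_ball V E k Y"
  unfolding out_ball_def by blast

lemma out_ball_0_subset: "out_ball V E 0 X \<subseteq> X"
proof
  fix y
  assume "y \<in> out_ball V E 0 X"
  then obtain x p where "x \<in> X" "dwalk V E p" "hd p = x" "last p = y" "plen p = 0"
    unfolding out_ball_def ddist_le_enat_iff by auto
  then show "y \<in> X"
    by (cases p) (auto simp: plen_def dest: dwalk_nonempty)
qed

lemma out_ball_Suc_subset:
  "out_ball V E (Suc k) X \<subseteq> X \<union> out_ball V E k (\<Union>x \<in> X \<inter> V. out_nbrs E x)"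
proof
  fix y
  assume "y \<in> out_ball V E (Suc k) X"
  then obtain x p where x: "y \<in> V" "x \<in> X" and p: "dwalk V E p" "hd p = x" "last p = y" "plen p \<le> Suc k"
    unfolding out_ball_def ddist_le_enat_iff by auto
  then obtain q where "p = x # q"
    using dwalk_nonempty by (cases p) auto
  show "y \<in> X \<union> out_ball V E k (\<Union>x \<in> X \<inter> V. out_nbrs E x)"
  proof (cases q)
    case Nil
    with p x \<open>p = x # q\<close> show ?thesis
      by simp
  next
    case (Cons z q')
    with p \<open>p = x # q\<close> have "x \<in> V" "(x, z) \<in> E" "ddist V E z y \<le> enat k"
      unfolding ddist_le_enat_iff by (auto simp: plen_def)
    with x show ?thesis
      unfolding out_ball_def out_nbrs_def by auto
  qed
qed

lemma finite_out_ball: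
  assumes "\<forall>v \<in> V. finite (out_nbrs E v)" and "finite X"
  shows "finite (out_ball V E k X)"
  using assms(2)
proof (induction k arbitrary: X)
  case 0
  then show ?case
    using out_ball_0_subset finite_subset by metis
next
  case (Suc k)
  then have "finite (\<Union>x \<in> X \<inter> V. out_nbrs E x)"
    using assms(1) by auto
  then show ?case
    using Suc out_ball_Suc_subset finite_subset by (metis finite_UnI)
qed

lemma finite_in_ball:
  assumes "\<forall>v \<in> V. finite (in_nbrs E v)" and "finite X"
  shows "finite (in_ball V E k X)"
  unfolding in_ball_eq_out_ball_converse
  using assms by (intro finite_out_ball) (auto simp: in_nbrs_def out_nbrs_def)

lemma in_ball_image_subset:
  assumes "g ` V \<subseteq> V" and "\<And>x y. x \<in> V \<Longrightarrow> y \<in> V \<Longrightarrow> (x, y) \<in> E \<Longrightarrow> (g x, g y) \<in> E"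
  shows "g ` in_ball V E k X \<subseteq> in_ball V E k (g ` X)"
  unfolding in_ball_eq_out_ball_converse
  using assms by (intro out_ball_image_subset) auto

lemma in_ball_mono: "X \<subseteq> Y \<Longrightarrow> in_ball V E k X \<subseteq> in_ball V E k Y"
  unfolding in_ball_def by blast

lemma finite_invariant_superset_of_balls:
  assumes "rooted V E r"
    and "\<forall>v \<in> V. finite (out_nbrs E v)" and "\<forall>v \<in> V. finite (in_nbrs E v)"
    and "g ` V \<subseteq> V" and "\<And>x y. x \<in> V \<Longrightarrow> y \<in> V \<Longrightarrow> (x, y) \<in> E \<Longrightarrow> (g x, g y) \<in> E"
    and "F \<subseteq> V" and "F \<noteq> {}" and "finite F" and "g ` F \<subseteq> F"
  obtains U where "finite U" and "U \<subseteq> V" and "g ` U \<subseteq> U"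
    and "out_ball V E n {r} \<union> in_ball V E n {r} \<subseteq> U"
proof -
  obtain f where "f \<in> F"
    using assms(7) by blast
  with assms(1,6) obtain L where L: "ddist V E r f = enat L"
    unfolding rooted_def by (metis less_infinityE subsetD)
  define W where "W = in_ball V E (L + n) F"
  define U where "U = W \<union> out_ball V E n W"
  have "finite U"
    unfolding U_def W_def using assms(2,3,8) by (intro finite_UnI finite_out_ball finite_in_ball)
  moreover have "U \<subseteq> V"
    unfolding U_def W_def in_ball_def out_ball_def by blast
  moreover have "g ` U \<subseteq> U"
  proof -
    have "g ` W \<subseteq> W"
      unfolding W_def using in_ball_image_subset[OF assms(4,5)] in_ball_mono[OF assms(9)] by (rule order_trans)
    moreover have "g ` out_ball V E n W \<subseteq> out_ball V E n W"
      using out_ball_image_subset[OF assms(4,5)] out_ball_mono[OF \<open>g ` W \<subseteq> W\<close>] by (rule order_trans)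
    ultimately show ?thesis
      unfolding U_def by blast
  qed
  moreover have "out_ball V E n {r} \<union> in_ball V E n {r} \<subseteq> U"
  proof -
    have "r \<in> W"
      unfolding W_def in_ball_def using assms(1) \<open>f \<in> F\<close> L by (force simp: rooted_def)
    then have "out_ball V E n {r} \<subseteq> out_ball V E n W"
      by (intro out_ball_mono) simp
    moreover have "in_ball V E n {r} \<subseteq> W"
    proof -
      have "ddist V E y f \<le> enat (L + n)" if "ddist V E y r \<le> enat n" for y
        using ddist_triangle[OF that] L by (simp add: add.commute)
      then show ?thesis
        unfolding W_def in_ball_def using \<open>f \<in> F\<close> by auto
    qed
    ultimately show ?thesis
      unfolding U_def by blast
  qed
  ultimately show thesis
    by (rule that)
qed

lemma funpow_restrict_id:
  assumes "f ` A \<subseteq> A" and "x \<in> A"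
  shows "(restrict_id f A ^^ n) x = (f ^^ n) x \<and> (f ^^ n) x \<in> A"
  using assms by (induction n) (auto simp: restrict_id_def)

lemma finite_endo_inj_funpow_fixes:
  assumes "finite U" and "g ` U \<subseteq> U" and "inj_on g U"
  obtains i where "i \<ge> 1" and "\<forall>v \<in> U. (g ^^ i) v = v"
proof -
  have "bij_betw g U U"
    using assms by (simp add: bij_betw_imageI endo_inj_surj)
  then have "permutation (restrict_id g U)"
    by (intro permutes_imp_permutation[OF assms(1)] permutes_restrict_id)
  then obtain i where i: "restrict_id g U ^^ i = id" "i > 0"
    by (rule permutation_is_nilpotent)
  have "(g ^^ i) v = v" if "v \<in> U" for v
    using funpow_restrict_id[OF assms(2) that, of i] i(1) by simp
  with i(2) show thesis
    by (intro that[of i]) auto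
qed

theorem lemma3p14:
  fixes V :: "'a set" and E :: "('a \<times> 'a) set" and r :: 'a and g :: "'a \<Rightarrow> 'a" and n :: nat
  assumes "E \<subseteq> V \<times> V"
    and "rooted V E r"
    and "hyperbolic V E"
    and "const_out_degree V E"
    and "bounded_in_degree V E"
    and "self_embedding V E g"
    and "elliptic V g"
  shows "\<exists>i::nat. i \<ge> 1 \<and>
           (\<forall>v \<in> out_ball V E n {r} \<union> in_ball V E n {r}. (g ^^ i) v = v)"
proof -
  obtain F where F: "F \<subseteq> V" "F \<noteq> {}" "finite F" "g ` F = F"
    using assms(7) unfolding elliptic_def by blast
  have g: "g ` V \<subseteq> V" "inj_on g V" "\<And>x y. x \<in> V \<Longrightarrow> y \<in> V \<Longrightarrow> (x, y) \<in> E \<Longrightarrow> (g x, g y) \<in> E"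
    using assms(6) unfolding self_embedding_def by auto
  have locally_finite: "\<forall>v \<in> V. finite (out_nbrs E v)" "\<forall>v \<in> V. finite (in_nbrs E v)"
    using assms(4,5) unfolding const_out_degree_def bounded_in_degree_def by auto
  obtain U where U: "finite U" "U \<subseteq> V" "g ` U \<subseteq> U"
    and balls: "out_ball V E n {r} \<union> in_ball V E n {r} \<subseteq> U"
    by (rule finite_invariant_superset_of_balls[OF assms(2) locally_finite g(1,3) F(1-3) equalityD1[OF F(4)]])
  have "inj_on g U"
    using g(2) U(2) by (rule inj_on_subset)
  then obtain i where "i \<ge> 1" "\<forall>v \<in> U. (g ^^ i) v = v"
    by (rule finite_endo_inj_funpow_fixes[OF U(1,3)])
  with balls show ?thesis
    by blast
qed

end
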